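(* For $n\in\{1,2\}$ and every $x>0$, $$\sqrt[n]{\frac{\bigl\vert\psi^{(n)}(x)\bigr\vert}{(n-1)!}}\, > e^{-\psi(1/\ln(1+1/x))}.$$ Moreover, for every $n\in\mathbb{N}$, every integer $k$ with $1\le k\le n-1$, and every $x>0$, $$\sqrt[n]{\frac{\bigl\vert\psi^{(n)}(x)\bigr\vert}{(n-1)!}}\, > \sqrt[k]{\frac{\bigl\vert\psi^{(k)}\bigl(1/\ln(1+1/x)\bigr)\bigr\vert}{(k-1)!}}.$$
   Context: $\Gamma(x)=\int_0^\infty t^{x-1}e^{-t}\,dt$ for $x>0$ is Euler's gamma function, $\psi(x)=\Gamma'(x)/\Gamma(x)$ is the psi (digamma) function, and $\psi^{(i)}$ for $i\in\mathbb{N}$ denotes the $i$-th derivative of $\psi$ (polygamma functions). *)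

theory Defs
  imports "HOL-Analysis.Analysis"
begin

end

theory Submission
  imports Defs "HOL-Real_Asymp.Real_Asymp"
begin

text \<open>
  For n > 0 and z > 0 the recurrence of the polygamma functions reads
  |psi_n(z)| - |psi_n(z + 1)| = n!/z^(n+1), and psi_n(z + m) \<rightarrow> 0 as m \<rightarrow> \<infinity>. Telescoping,
  every G with G(z + m) \<rightarrow> 0 whose differences G(z) - G(z + 1) stay below (above)
  n!/z^(n+1) is a lower (upper) bound of |psi_n|. The choices G(z) = (n-1)!/z^n and
  G(z) = (n-1)! (e^(1/z) - 1)^n give (1/x)^n < |psi_n(x)|/(n-1)! \<le> (e^(1/x) - 1)^n; at
  t = 1/ln(1 + 1/x) the upper bound is exactly (1/x)^n, whence the second claim. For the
  first, the same telescoping gives psi(y) \<ge> ln y - 1/y, so the right-hand side is at most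
  (1 + s) ln(1 + s) with s = 1/x, and the sharper choices G(z) = 1/z + 1/(2z^2) for psi_1
  and G(z) = 1/z^2 + 1/z^3 for psi_2 beat this.
\<close>

lemma cubic_Taylor_le_exp:
  fixes x :: real assumes "x \<ge> 0"
  shows "1 + x + x^2/2 + x^3/6 \<le> exp x"
proof -
  have s: "(\<lambda>n. x^n / fact n) sums exp x"
    using exp_converges[of x] by (simp add: scaleR_conv_of_real divide_inverse mult.commute)
  have "(\<Sum>n<4. x^n / fact n) \<le> (\<Sum>n. x^n / fact n)"
    by (rule sum_le_suminf) (use s assms in \<open>auto simp: sums_iff\<close>)
  also have "\<dots> = exp x" using s by (simp add: sums_iff)
  finally show ?thesis by (simp add: eval_nat_numeral fact_numeral)
qed

lemma exp_minus_le_quadratic: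
  fixes w :: real assumes "w \<ge> 0"
  shows "exp (-w) \<le> 1 - w + w^2/2"
proof -
  let ?g = "\<lambda>w. 1 - w + w^2/2 - exp (-w)"
  have "?g 0 \<le> ?g w"
  proof (rule DERIV_nonneg_imp_increasing_open[OF assms])
    fix y :: real
    have "(?g has_real_derivative (-1 + y + exp (-y))) (at y)"
      by (auto intro!: derivative_eq_intros simp: power2_eq_square)
    moreover have "-1 + y + exp (-y) \<ge> 0" using exp_ge_add_one_self[of "-y"] by linarith
    ultimately show "\<exists>d. (?g has_real_derivative d) (at y) \<and> d \<ge> 0" by blast
  next
    show "continuous_on {0..w} ?g" by (intro continuous_intros) auto
  qed
  then show ?thesis by simp
qed

lemma ln_add_one_mult_add_one_le:
  fixes s :: real assumes "s \<ge> 0"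
  shows "ln (1 + s) * (1 + s) \<le> s + s^2/2"
proof -
  let ?g = "\<lambda>s. s + s^2/2 - ln (1 + s) * (1 + s)"
  have "?g 0 \<le> ?g s"
  proof (rule DERIV_nonneg_imp_increasing_open[OF assms])
    fix y :: real assume y: "0 < y"
    have "(?g has_real_derivative (y - ln (1 + y))) (at y)"
      using y by (auto intro!: derivative_eq_intros)
    moreover have "y - ln (1 + y) \<ge> 0" using ln_add_one_self_le_self[of y] y by linarith
    ultimately show "\<exists>d. (?g has_real_derivative d) (at y) \<and> d \<ge> 0" by blast
  next
    show "continuous_on {0..s} ?g" using assms by (intro continuous_intros) auto
  qed
  then show ?thesis by simp
qed

lemma two_ln_le_diff_inverse:
  fixes z :: real assumes "z \<ge> 1"
  shows "2 * ln z \<le> z - 1/z"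
proof -
  let ?g = "\<lambda>z. z - 1/z - 2 * ln z"
  have "?g 1 \<le> ?g z"
  proof (rule DERIV_nonneg_imp_increasing_open[OF assms])
    fix y :: real assume y: "1 < y"
    have "(?g has_real_derivative (1 + 1/y^2 - 2/y)) (at y)"
      using y by (auto intro!: derivative_eq_intros simp: power2_eq_square field_simps)
    moreover have "1 + 1/y^2 - 2/y = (1 - 1/y)^2" using y by (simp add: field_simps power2_eq_square)
    ultimately show "\<exists>d. (?g has_real_derivative d) (at y) \<and> d \<ge> 0" by auto
  next
    show "continuous_on {1..z} ?g" using assms by (intro continuous_intros) auto
  qed
  then show ?thesis by simp
qed

lemma ln_add_one_mult_add_one_le_sqrt:
  fixes s :: real assumes s: "s \<ge> 0"
  shows "ln (1 + s) * (1 + s) \<le> sqrt (s^2 + s^3)"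
proof -
  define z where "z = sqrt (1 + s)"
  have z: "z \<ge> 1" and z2: "z * z = 1 + s" using s by (simp_all add: z_def)
  have "ln (1 + s) = 2 * ln z" using z z2 ln_realpow[of z 2] by (simp add: power2_eq_square)
  also have "\<dots> \<le> z - 1/z" by (rule two_ln_le_diff_inverse[OF z])
  also have "\<dots> = s / z" using z z2 by (simp add: field_simps)
  finally have "ln (1 + s) * z \<le> s" using z by (simp add: field_simps)
  have "ln (1 + s) * (1 + s) = ln (1 + s) * z * z" using z2 by (simp add: mult.assoc)
  also have "\<dots> \<le> s * z" using \<open>ln (1 + s) * z \<le> s\<close> z by (simp add: mult_right_mono)
  also have "\<dots> = sqrt (s^2 * (1 + s))" using s by (simp add: z_def real_sqrt_mult)
  also have "s^2 * (1 + s) = s^2 + s^3" by (simp add: algebra_simps eval_nat_numeral)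
  finally show ?thesis .
qed

lemma exp_minus_exp_div_ge_square:
  fixes v :: real assumes v: "v > 0"
  shows "v^2 \<le> exp v - exp (v/(1+v))"
proof -
  define w where "w = v/(1+v)"
  have w0: "w \<ge> 0" and vw: "v * w \<ge> 0" using v by (simp_all add: w_def)
  have "v - w = v * w" and vw2: "v * w = v^2 * (1 - w)"
    using v by (simp_all add: w_def field_simps power2_eq_square)
  hence split: "exp v = exp w * exp (v * w)" by (metis add.commute diff_add_cancel exp_add)
  have "1 \<le> exp w * (1 - w + w^2/2)"
    using mult_left_mono[OF exp_minus_le_quadratic[OF w0], of "exp w"] by (simp add: exp_minus)
  hence "v^2 \<le> v^2 * (exp w * (1 - w + w^2/2))" by (simp add: mult_le_cancel_left1)
  also have "\<dots> = exp w * (v^2 * (1 - w + w^2/2))" by (simp only: mult_ac)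
  also have "v^2 * (1 - w + w^2/2) = v * w + (v * w)^2/2"
    using vw2 by (simp add: power_mult_distrib algebra_simps)
  also have "exp w * (v * w + (v * w)^2/2) \<le> exp w * (exp (v * w) - 1)"
    using cubic_Taylor_le_exp[OF vw] zero_le_power[OF vw, of 3] by (intro mult_left_mono) (linarith, simp)
  also have "\<dots> = exp v - exp w" by (simp add: split algebra_simps)
  finally show ?thesis by (simp add: w_def)
qed

lemma exp_minus_one_mult_ge_square:
  fixes v :: real assumes v: "v > 0"
  shows "v^2 \<le> (exp v - 1) * (exp (v/(1+v)) - 1)"
proof -
  define w where "w = v/(1+v)"
  have w0: "w \<ge> 0" and e: "w * (1+v) = v" using v by (simp_all add: w_def)
  have "(6 * w + 3 * w^2 + w^3) * (1+v)^3
        = 6 * (w * (1+v)) * (1+v)^2 + 3 * (w * (1+v))^2 * (1+v) + (w * (1+v))^3"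
    by (simp add: power2_eq_square power3_eq_cube algebra_simps)
  also have "\<dots> = 6 * v * (1+v)^2 + 3 * v^2 * (1+v) + v^3" by (simp only: e)
  finally have W: "(6 * w + 3 * w^2 + w^3) * (1+v)^3 = 6 * v * (1+v)^2 + 3 * v^2 * (1+v) + v^3" .
  have "(6 * v + 3 * v^2 + v^3) * (6 * w + 3 * w^2 + w^3) * (1+v)^3
        = 36 * (v^2 * (1+v)^3) + (3 * v^4 + 9 * v^5 + 10 * v^6)"
    unfolding mult.assoc W by (simp add: power2_eq_square power3_eq_cube eval_nat_numeral algebra_simps)
  also have "\<dots> \<ge> 36 * (v^2 * (1+v)^3)" using v by simp
  finally have "36 * v^2 \<le> (6 * v + 3 * v^2 + v^3) * (6 * w + 3 * w^2 + w^3)"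
    using v by (simp add: mult.assoc mult_le_cancel_right)
  hence "v^2 \<le> ((6 * v + 3 * v^2 + v^3)/6) * ((6 * w + 3 * w^2 + w^3)/6)" by simp
  also have "\<dots> \<le> (exp v - 1) * (exp w - 1)"
    using cubic_Taylor_le_exp[of v] cubic_Taylor_le_exp[of w] v w0 by (intro mult_mono) auto
  finally show ?thesis by (simp add: w_def)
qed

text \<open>
  In a^k - b^k = (a - b) \<Sum>(i<k) b^(k-1-i) a^i the summands i and k-1-i have product
  (ab)^(k-1) \<ge> v^(2(k-1)), so by AM-GM each such pair contributes at least 2 v^(k-1).
\<close>
lemma power_diff_ge_of_mult_ge:
  fixes a b v :: real
  assumes a: "a \<ge> 0" and b: "b \<ge> 0" and v: "v \<ge> 0"
      and ab: "a * b \<ge> v^2" and d: "a - b \<ge> v^2"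
  shows "a^k - b^k \<ge> real k * v^(k+1)"
proof -
  let ?S = "\<lambda>i. b^(k - Suc i) * a^i"
  have pair: "?S i + ?S (k - Suc i) \<ge> 2 * v^(k - 1)" if i: "i < k" for i
  proof -
    have "i + (k - Suc i) = k - 1" using i by simp
    hence "a^i * a^(k - Suc i) = a^(k-1)" "b^i * b^(k - Suc i) = b^(k-1)"
      by (simp_all flip: power_add)
    moreover have "?S i * ?S (k - Suc i) = (a^i * a^(k - Suc i)) * (b^i * b^(k - Suc i))"
      using i by (simp add: algebra_simps)
    ultimately have "?S i * ?S (k - Suc i) = (a * b)^(k-1)" by (simp add: power_mult_distrib)
    moreover have "(v^(k-1))^2 \<le> (a * b)^(k-1)"
      using power_mono[OF ab, of "k - 1"] by (simp add: power_mult[symmetric] mult.commute)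
    ultimately have "(2 * v^(k-1))^2 \<le> (?S i + ?S (k - Suc i))^2"
      using zero_le_power2[of "?S i - ?S (k - Suc i)"] by (simp add: power2_eq_square algebra_simps)
    thus ?thesis by (rule power2_le_imp_le) (use a b in auto)
  qed
  have reindex: "(\<Sum>i<k. ?S (k - Suc i)) = (\<Sum>i<k. ?S i)" by (rule sum.nat_diff_reindex)
  have "2 * (\<Sum>i<k. ?S i) = (\<Sum>i<k. ?S i) + (\<Sum>i<k. ?S (k - Suc i))"
    by (simp only: reindex mult_2)
  also have "\<dots> = (\<Sum>i<k. ?S i + ?S (k - Suc i))" by (simp only: sum.distrib)
  also have "\<dots> \<ge> (\<Sum>i<k. 2 * v^(k-1))" by (rule sum_mono) (use pair in auto)
  finally have S: "(\<Sum>i<k. ?S i) \<ge> real k * v^(k-1)" by simp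
  have "0 \<le> a - b" using d zero_le_power2[of v] by linarith
  have "a^k - b^k = (a - b) * (\<Sum>i<k. ?S i)" by (rule power_diff_sumr2)
  also have "\<dots> \<ge> v^2 * (real k * v^(k-1))"
    using d S v \<open>0 \<le> a - b\<close> by (intro mult_mono) (auto intro!: sum_nonneg simp: a b)
  finally show ?thesis
    by (cases k) (simp_all add: power2_eq_square algebra_simps)
qed

lemma inverse_power_diff_less:
  fixes z :: real assumes z: "z > 0" and n: "n > 0"
  shows "1/z^n - 1/(z+1)^n < real n / z^Suc n"
proof -
  have "(z+1)^n - z^n = (\<Sum>i<n. z^(n - Suc i) * (z+1)^i)"
    using power_diff_sumr2[of "z+1" n z] by simp
  also have "\<dots> \<le> (\<Sum>i<n. (z+1)^(n - Suc i) * (z+1)^i)"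
    using z by (intro sum_mono mult_right_mono power_mono) auto
  also have "\<dots> = real n * (z+1)^(n-1)" by (simp add: power_add[symmetric])
  finally have A: "(z+1)^n - z^n \<le> real n * (z+1)^(n-1)" .
  have "1/z^n - 1/(z+1)^n = ((z+1)^n - z^n) / (z^n * (z+1)^n)"
    using z by (simp add: field_simps)
  also have "\<dots> \<le> real n * (z+1)^(n-1) / (z^n * ((z+1)^(n-1) * (z+1)))"
    using A z n by (simp add: divide_right_mono power_Suc2[symmetric])
  also have "\<dots> = real n / (z^n * (z+1))" using z by simp
  also have "\<dots> < real n / z^Suc n"
    using z n by (intro divide_strict_left_mono) (auto simp: mult_strict_left_mono)
  finally show ?thesis .
qed

lemma nonneg_if_shift_decreasing_tendsto_zero:
  fixes D :: "real \<Rightarrow> real"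
  assumes y: "y > 0" and step: "\<And>z. z > 0 \<Longrightarrow> D (z + 1) \<le> D z"
      and lim: "(\<lambda>m. D (y + real m)) \<longlonglongrightarrow> 0"
  shows "0 \<le> D y"
proof -
  have "D (y + real m) \<le> D y" for m
  proof (induction m)
    case (Suc m)
    have "D (y + real (Suc m)) = D ((y + real m) + 1)" by (simp add: algebra_simps)
    also have "\<dots> \<le> D (y + real m)" using y by (intro step) simp
    finally show ?case using Suc by simp
  qed simp
  then show ?thesis by (intro LIMSEQ_le_const2[OF lim]) auto
qed

lemma abs_Polygamma_real:
  fixes y :: real assumes n: "n > 0" and y: "y > 0"
  shows "\<bar>Polygamma n y\<bar> = (-1)^Suc n * Polygamma n y"
proof (cases "even n")
  case True
  thus ?thesis using Polygamma_real_even_neg[OF y n] by simp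
next
  case False
  thus ?thesis using Polygamma_real_odd_pos[of y n] y nonpos_Ints_nonpos[of y] by force
qed

lemma abs_Polygamma_real_plus1:
  fixes y :: real assumes n: "n > 0" and y: "y > 0"
  shows "\<bar>Polygamma n (y + 1)\<bar> = \<bar>Polygamma n y\<bar> - fact n / y^Suc n"
proof -
  have "(-1::real)^n * (-1)^n = 1" by (simp flip: power_mult_distrib)
  moreover have "\<bar>Polygamma n (y + 1)\<bar> = (-1)^Suc n * Polygamma n (y + 1)"
    using y by (intro abs_Polygamma_real n) simp
  ultimately show ?thesis using Polygamma_plus1[of y n] y
    by (simp add: abs_Polygamma_real[OF n y] algebra_simps)
qed

lemma Polygamma_real_shift_tendsto_zero:
  fixes y :: real assumes n: "n > 0" and y: "y > 0"
  shows "(\<lambda>m. Polygamma n (y + real m)) \<longlonglongrightarrow> 0"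
proof -
  have eq: "Polygamma n (y + real m) =
      Polygamma n y + (-1)^n * fact n * (\<Sum>k<m. inverse ((y + real k)^Suc n))" for m
    using Polygamma_plus_of_nat[of m y n] y by (auto simp: divide_inverse)
  have "(\<lambda>m. \<Sum>k<m. inverse ((y + real k)^Suc n)) \<longlonglongrightarrow> (-1)^Suc n * Polygamma n y / fact n"
    using Polygamma_LIMSEQ[of y n] y n by (simp add: sums_def)
  hence "(\<lambda>m. Polygamma n y + (-1)^n * fact n * (\<Sum>k<m. inverse ((y + real k)^Suc n)))
          \<longlonglongrightarrow> Polygamma n y + (-1)^n * fact n * ((-1)^Suc n * Polygamma n y / fact n)"
    by (intro tendsto_intros)
  also have "Polygamma n y + (-1)^n * fact n * ((-1)^Suc n * Polygamma n y / fact n) = 0"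
    by (simp add: algebra_simps)
  finally show ?thesis by (simp only: eq)
qed

lemma abs_Polygamma_real_ge_telescoping:
  fixes G :: "real \<Rightarrow> real"
  assumes n: "n > 0" and y: "y > 0"
      and step: "\<And>z. z > 0 \<Longrightarrow> G z - G (z + 1) \<le> fact n / z^Suc n"
      and lim: "(\<lambda>m. G (y + real m)) \<longlonglongrightarrow> 0"
  shows "G y \<le> \<bar>Polygamma n y\<bar>"
proof -
  let ?D = "\<lambda>z. \<bar>Polygamma n z\<bar> - G z"
  have "0 \<le> ?D y"
  proof (rule nonneg_if_shift_decreasing_tendsto_zero[OF y])
    show "?D (z + 1) \<le> ?D z" if "z > 0" for z
      using abs_Polygamma_real_plus1[OF n that] step[OF that] by simp
    have "(\<lambda>m. \<bar>Polygamma n (y + real m)\<bar> - G (y + real m)) \<longlonglongrightarrow> \<bar>0\<bar> - 0"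
      by (intro tendsto_intros Polygamma_real_shift_tendsto_zero n y lim)
    thus "(\<lambda>m. ?D (y + real m)) \<longlonglongrightarrow> 0" by simp
  qed
  thus ?thesis by simp
qed

lemma abs_Polygamma_real_gt_telescoping:
  fixes G :: "real \<Rightarrow> real"
  assumes n: "n > 0" and y: "y > 0"
      and step: "\<And>z. z > 0 \<Longrightarrow> G z - G (z + 1) < fact n / z^Suc n"
      and lim: "\<And>y. y > 0 \<Longrightarrow> (\<lambda>m. G (y + real m)) \<longlonglongrightarrow> 0"
  shows "G y < \<bar>Polygamma n y\<bar>"
proof -
  have "G (y + 1) \<le> \<bar>Polygamma n (y + 1)\<bar>"
    using y by (intro abs_Polygamma_real_ge_telescoping[OF n _ less_imp_le[OF step] lim]) auto
  thus ?thesis using abs_Polygamma_real_plus1[OF n y] step[OF y] by simp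
qed

lemma abs_Polygamma_real_le_telescoping:
  fixes G :: "real \<Rightarrow> real"
  assumes n: "n > 0" and y: "y > 0"
      and step: "\<And>z. z > 0 \<Longrightarrow> G z - G (z + 1) \<ge> fact n / z^Suc n"
      and lim: "(\<lambda>m. G (y + real m)) \<longlonglongrightarrow> 0"
  shows "\<bar>Polygamma n y\<bar> \<le> G y"
proof -
  let ?D = "\<lambda>z. G z - \<bar>Polygamma n z\<bar>"
  have "0 \<le> ?D y"
  proof (rule nonneg_if_shift_decreasing_tendsto_zero[OF y])
    show "?D (z + 1) \<le> ?D z" if "z > 0" for z
      using abs_Polygamma_real_plus1[OF n that] step[OF that] by simp
    have "(\<lambda>m. G (y + real m) - \<bar>Polygamma n (y + real m)\<bar>) \<longlonglongrightarrow> 0 - \<bar>0\<bar>"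
      by (intro tendsto_intros Polygamma_real_shift_tendsto_zero n y lim)
    thus "(\<lambda>m. ?D (y + real m)) \<longlonglongrightarrow> 0" by simp
  qed
  thus ?thesis by simp
qed

lemma ln_minus_inverse_le_Digamma:
  fixes y :: real assumes y: "y > 0"
  shows "ln y - 1/y \<le> Digamma y"
proof -
  let ?D = "\<lambda>z. Digamma z - ln z + 1/z"
  have "0 \<le> ?D y"
  proof (rule nonneg_if_shift_decreasing_tendsto_zero[OF y])
    fix z :: real assume z: "z > 0"
    have "ln (z/(z+1)) \<le> z/(z+1) - 1" using z by (intro ln_le_minus_one) simp
    also have "z/(z+1) - 1 = - 1/(z+1)" using z by (simp add: field_simps)
    finally have "ln z - ln (z+1) \<le> - 1/(z+1)" using z by (simp add: ln_div)
    thus "?D (z + 1) \<le> ?D z" using z by (simp add: Digamma_plus1)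
  next
    have eq: "Digamma (y + real m) = Digamma y + (\<Sum>k<m. inverse (y + real k))" for m
      using Polygamma_plus_of_nat[of m y 0] y by (auto simp: divide_inverse)
    have L: "(\<lambda>m. ln (real m) - (\<Sum>k<m. inverse (y + real k))) \<longlonglongrightarrow> Digamma y"
      using Digamma_LIMSEQ[of y] y by simp
    have L2: "(\<lambda>m. ln (real m) - ln (y + real m)) \<longlonglongrightarrow> 0" using y by real_asymp
    have L3: "(\<lambda>m. 1 / (y + real m)) \<longlonglongrightarrow> 0" using y by real_asymp
    have "(\<lambda>m. Digamma y - (ln (real m) - (\<Sum>k<m. inverse (y + real k)))
              + (ln (real m) - ln (y + real m)) + 1 / (y + real m))
           \<longlonglongrightarrow> Digamma y - Digamma y + 0 + 0"
      by (intro tendsto_intros L L2 L3)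
    thus "(\<lambda>m. ?D (y + real m)) \<longlonglongrightarrow> 0" by (simp add: eq algebra_simps)
  qed
  thus ?thesis by simp
qed

lemma inverse_power_less_abs_Polygamma:
  fixes x :: real assumes n: "n > 0" and x: "x > 0"
  shows "(1/x)^n < \<bar>Polygamma n x\<bar> / fact (n - 1)"
proof -
  let ?G = "\<lambda>y::real. fact (n - 1) * (1/y)^n"
  have fn: "fact n = real n * fact (n - 1)" using n by (metis fact_reduce of_nat_fact)
  have "?G x < \<bar>Polygamma n x\<bar>"
  proof (rule abs_Polygamma_real_gt_telescoping[OF n x])
    fix z :: real assume z: "z > 0"
    have "?G z - ?G (z + 1) = fact (n - 1) * (1/z^n - 1/(z+1)^n)"
      by (simp add: power_divide algebra_simps)
    also have "\<dots> < fact (n - 1) * (real n / z^Suc n)"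
      using inverse_power_diff_less[OF z n] by (intro mult_strict_left_mono) auto
    also have "\<dots> = fact n / z^Suc n" by (simp add: fn)
    finally show "?G z - ?G (z + 1) < fact n / z^Suc n" .
  next
    fix y :: real assume y: "y > 0"
    have "(\<lambda>m. 1 / (y + real m)) \<longlonglongrightarrow> 0" using y by real_asymp
    hence "(\<lambda>m. fact (n - 1) * (1 / (y + real m))^n) \<longlonglongrightarrow> fact (n - 1) * 0^n"
      by (intro tendsto_intros)
    moreover have "fact (n - 1) * 0^n = (0::real)" using n by simp
    ultimately show "(\<lambda>m. ?G (y + real m)) \<longlonglongrightarrow> 0" by (simp only:)
  qed
  thus ?thesis by (simp add: field_simps)
qed

lemma abs_Polygamma_le_exp_inverse_minus_one_power:
  fixes t :: real assumes k: "k > 0" and t: "t > 0"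
  shows "\<bar>Polygamma k t\<bar> / fact (k - 1) \<le> (exp (1/t) - 1)^k"
proof -
  let ?G = "\<lambda>y::real. fact (k - 1) * (exp (1/y) - 1)^k"
  have fk: "fact k = fact (k - 1) * real k" using k by (metis fact_reduce of_nat_fact mult.commute)
  have "\<bar>Polygamma k t\<bar> \<le> ?G t"
  proof (rule abs_Polygamma_real_le_telescoping[OF k t])
    fix z :: real assume z: "z > 0"
    define v where "v = 1/z"
    have v: "v > 0" using z by (simp add: v_def)
    have w: "1/(z+1) = v/(1+v)" using z by (simp add: v_def field_simps)
    have "real k * v^(k+1) \<le> (exp v - 1)^k - (exp (v/(1+v)) - 1)^k"
      using exp_minus_one_mult_ge_square[OF v] exp_minus_exp_div_ge_square[OF v] v
      by (intro power_diff_ge_of_mult_ge) auto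
    hence "fact (k - 1) * (real k * v^(k+1))
        \<le> fact (k - 1) * ((exp v - 1)^k - (exp (v/(1+v)) - 1)^k)"
      by (intro mult_left_mono) auto
    also have "\<dots> = ?G z - ?G (z + 1)" by (simp add: w v_def[symmetric] right_diff_distrib)
    finally show "fact k / z^Suc k \<le> ?G z - ?G (z + 1)"
      by (simp add: fk v_def power_divide)
  next
    have "(\<lambda>m. 1 / (t + real m)) \<longlonglongrightarrow> 0" using t by real_asymp
    hence "(\<lambda>m. fact (k - 1) * (exp (1 / (t + real m)) - 1)^k) \<longlonglongrightarrow> fact (k - 1) * (exp 0 - 1)^k"
      by (intro tendsto_intros)
    moreover have "fact (k - 1) * (exp 0 - 1)^k = (0::real)" using k by simp
    ultimately show "(\<lambda>m. ?G (t + real m)) \<longlonglongrightarrow> 0" by (simp only:)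
  qed
  thus ?thesis by (simp add: field_simps)
qed

lemma abs_Polygamma_1_real_gt:
  fixes x :: real assumes x: "x > 0"
  shows "1/x + 1/(2 * x^2) < \<bar>Polygamma 1 x\<bar>"
proof (rule abs_Polygamma_real_gt_telescoping[OF _ x])
  show "0 < (1::nat)" by simp
next
  fix z :: real assume z: "z > 0"
  have "1/z + 1/(2 * z^2) - (1/(z+1) + 1/(2 * (z+1)^2)) < 1/z^2"
    using z by (simp add: divide_simps) (simp add: algebra_simps power2_eq_square add_pos_pos)
  thus "1/z + 1/(2 * z^2) - (1/(z+1) + 1/(2 * (z+1)^2)) < fact 1 / z^Suc 1"
    by (simp add: power2_eq_square)
qed real_asymp

lemma abs_Polygamma_2_real_gt:
  fixes x :: real assumes x: "x > 0"
  shows "1/x^2 + 1/x^3 < \<bar>Polygamma 2 x\<bar>"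
proof (rule abs_Polygamma_real_gt_telescoping[OF _ x])
  show "0 < (2::nat)" by simp
next
  fix z :: real assume z: "z > 0"
  define a where "a = z + 1"
  have a: "a > 0" using z by (simp add: a_def)
  have "1/z^2 + 1/z^3 - (1/a^2 + 1/a^3) = (z * a^3 + a^3 - z^3 * a - z^3) / (z^3 * a^3)"
    using z a by (simp add: field_simps power2_eq_square power3_eq_cube)
  also have "z * a^3 + a^3 - z^3 * a - z^3 = 2 * a^3 - (2 * z + 1)"
    by (simp add: a_def algebra_simps power3_eq_cube)
  also have "(2 * a^3 - (2 * z + 1)) / (z^3 * a^3) = 2/z^3 - (2 * z + 1) / (z^3 * a^3)"
    using z a by (simp add: diff_divide_distrib)
  also have "\<dots> < 2/z^3" using z a by simp
  finally show "1/z^2 + 1/z^3 - (1/(z+1)^2 + 1/(z+1)^3) < fact 2 / z^Suc 2"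
    by (simp add: a_def fact_numeral)
qed real_asymp

lemma exp_minus_Digamma_inverse_ln_le:
  fixes x :: real assumes x: "x > 0"
  shows "exp (- Digamma (1 / ln (1 + 1/x))) \<le> ln (1 + 1/x) * (1 + 1/x)"
proof -
  define u where "u = ln (1 + 1/x)"
  have u: "u > 0" using x by (simp add: u_def ln_gt_zero)
  have "- Digamma (1/u) \<le> ln u + u"
    using ln_minus_inverse_le_Digamma[of "1/u"] u by (simp add: ln_div)
  hence "exp (- Digamma (1/u)) \<le> exp (ln u + u)" by simp
  also have "\<dots> = u * (1 + 1/x)" using u x by (simp add: exp_add u_def add_pos_pos)
  finally show ?thesis by (simp add: u_def)
qed

theorem theorem1p1:
  shows "(\<forall>n::nat. \<forall>x::real. (n = 1 \<or> n = 2) \<and> x > 0 \<longrightarrow>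
            root n (\<bar>Polygamma n x\<bar> / fact (n - 1))
              > exp (- Digamma (1 / ln (1 + 1 / x))))
       \<and> (\<forall>n::nat. \<forall>k::nat. \<forall>x::real. 1 \<le> k \<and> k \<le> n - 1 \<and> x > 0 \<longrightarrow>
            root n (\<bar>Polygamma n x\<bar> / fact (n - 1))
              > root k (\<bar>Polygamma k (1 / ln (1 + 1 / x))\<bar> / fact (k - 1)))"
proof (intro conjI allI impI)
  fix n :: nat and x :: real
  assume h: "(n = 1 \<or> n = 2) \<and> x > 0"
  define s where "s = 1/x"
  have x: "x > 0" and s: "s > 0" using h by (simp_all add: s_def)
  have dig: "exp (- Digamma (1 / ln (1 + 1 / x))) \<le> ln (1 + s) * (1 + s)"
    using exp_minus_Digamma_inverse_ln_le[OF x] by (simp add: s_def)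
  from h consider "n = 1" | "n = 2" by blast
  then show "root n (\<bar>Polygamma n x\<bar> / fact (n - 1)) > exp (- Digamma (1 / ln (1 + 1 / x)))"
  proof cases
    case 1
    thus ?thesis using dig ln_add_one_mult_add_one_le[of s] abs_Polygamma_1_real_gt[OF x] s
      by (simp add: s_def power_divide)
  next
    case 2
    have "ln (1 + s) * (1 + s) \<le> sqrt (s^2 + s^3)"
      using ln_add_one_mult_add_one_le_sqrt[of s] s by simp
    also have "\<dots> < sqrt \<bar>Polygamma 2 x\<bar>"
      using abs_Polygamma_2_real_gt[OF x] by (simp add: s_def power_divide)
    finally show ?thesis using 2 dig by (simp add: sqrt_def)
  qed
next
  fix n k :: nat and x :: real
  assume h: "1 \<le> k \<and> k \<le> n - 1 \<and> x > 0"
  hence x: "x > 0" and k: "k > 0" and n: "n > 0" by auto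
  have t: "1 / ln (1 + 1/x) > 0" using x by (simp add: ln_gt_zero)
  have "root k (\<bar>Polygamma k (1 / ln (1 + 1/x))\<bar> / fact (k - 1)) \<le> root k ((1/x)^k)"
    using abs_Polygamma_le_exp_inverse_minus_one_power[OF k t] k x by (simp add: add_pos_pos)
  also have "\<dots> = root n ((1/x)^n)" using x k n by (simp add: real_root_power_cancel)
  also have "\<dots> < root n (\<bar>Polygamma n x\<bar> / fact (n - 1))"
    using inverse_power_less_abs_Polygamma[OF n x] n by simp
  finally show "root n (\<bar>Polygamma n x\<bar> / fact (n - 1))
              > root k (\<bar>Polygamma k (1 / ln (1 + 1 / x))\<bar> / fact (k - 1))" .
qed

end
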